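(* Consider the single-input single-output discrete-time closed-loop setting described in the context, and fix a DFT frequency $\omega_\ell = 2\pi\ell/N$ at which $S(e^{j\omega_\ell})R(e^{j\omega_\ell}) \neq 0$. Let $Z_{\mathrm{dir}} := \frac{1}{SR}\big(\bar V_y - G\bar V_u\big)$ and $Z_{\mathrm{io}} := \frac{1}{SR}\big(\bar V_y^{(1)} - G\bar V_u^{(2)}\big)$ be the limits in distribution, as $\sigma\to 0$, of $\sigma^{-1}(\widehat G_{\mathrm{dir}}-G)$ and $\sigma^{-1}(\widehat{\widehat G}_{\mathrm{io}}-G)$ respectively. Let $\bar\sigma_{yu} := \mathbb{E}[\bar V_y \bar V_u^{\ast}]$. If $\Re\big[G^{\ast}(e^{j\omega_\ell})\,\bar\sigma_{yu}\big] < 0$, then \[ \mathbb{E}\big[|Z_{\mathrm{io}}|^2\big] < \mathbb{E}\big[|Z_{\mathrm{dir}}|^2\big], \] i.e., the asymptotic variance (as $\sigma\to0$) of $\widehat{\widehat G}_{\mathrm{io}}$ is strictly smaller than that of $\widehat G_{\mathrm{dir}}$ at $\omega_\ell$.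
   Context: Setting: unit sample time, $\mathrm{q}$ the forward shift operator. Plant $G(\mathrm{q})$ and controller $C(\mathrm{q})$ are linear time-invariant and the closed loop is stable; the sensitivity is $S = 1/(1+GC)$. Noise $v(k) = H(\mathrm{q})e(k)$ with $H$ a stable spectral factor and $e(k)=\sigma\bar e(k)$, where $\bar e$ is a zero-mean unit-variance white process whose distribution does not depend on $\sigma>0$. Reference $r(k)=r_2(k)+C(\mathrm{q})r_1(k)$ with $r_1,r_2$ known, $r$ periodic with period $N$. Plant output and input: $y = S G r + S v$, $u = S r - S C v$. Data $\{(r_k,u_k,y_k)\}_{k=0}^{N-1}$ consist of one period collected in steady state, synchronized with $r$. The DFT of a record $x_0,\dots,x_{N-1}$ is $X(e^{j\omega_\ell}) = N^{-1/2}\sum_{k=0}^{N-1}x_k e^{-j\omega_\ell k}$, $\omega_\ell = 2\pi\ell/N$. At the fixed frequency, $G,S,C,H$ denote the values of the transfer functions at $e^{j\omega_\ell}$, and $R,U,Y$ the DFTs of $r,u,y$. The noise contributions $V_y, V_u$ are defined by $Y = SGR + V_y$, $U = SR + V_u$; they are proportional to $\sigma$, and $\bar V_y := V_y/\sigma$, $\bar V_u := V_u/\sigma$ are zero-mean complex random variables with finite variances whose distributions do not depend on $\sigma$. Direct estimator: $\widehat G_{\mathrm{dir}} := Y/U$. Two-experiment joint input-output estimator: a second, independent experiment with the same excitation $r$ (same deterministic parts, independent noise) is performed; $Y^{(1)}$ is the output DFT from experiment 1 and $U^{(2)}$ the input DFT from experiment 2, with normalized noise contributions $\bar V_y^{(1)}$,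 $\bar V_u^{(2)}$ (independent of each other, distributed as $\bar V_y$, $\bar V_u$ respectively); $\widehat{\widehat G}_{\mathrm{io}} := \dfrac{Y^{(1)}/R}{U^{(2)}/R}$. The asymptotic variance of an estimator is $\mathbb{E}|Z|^2$ of its limiting distribution $Z$ of $\sigma^{-1}(\widehat G - G)$ as $\sigma\to0$. *)

theory Defs
  imports "HOL-Probability.Probability"
begin

text \<open>Asymptotic variance of an estimator whose normalized error
  converges in distribution to the complex random variable Z on M:
  the second moment E|Z|^2.\<close>
definition asym_var :: "'a measure \<Rightarrow> ('a \<Rightarrow> complex) \<Rightarrow> real" where
  "asym_var M Z = (\<integral>x. (cmod (Z x))^2 \<partial>M)"

end

theory Submission
  imports Defs
begin

text \<open>Expanding the square, \<open>E|a - G b|\<^sup>2 = E|a|\<^sup>2 + |G|\<^sup>2 E|b|\<^sup>2 - 2 Re (G\<^sup>* E[a b\<^sup>*])\<close>.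
  Passing from \<open>(Vy, Vu)\<close> to \<open>(Vy1, Vu2)\<close> keeps both marginal second moments, because
  the distributions agree, but kills the cross moment, because \<open>Vy1\<close> and \<open>Vu2\<close> are
  independent and \<open>Vy1\<close> has zero mean. So the second
  moment drops by \<open>-2 Re (G\<^sup>* E[Vy Vu\<^sup>*]) > 0\<close>, and dividing by \<open>|SR|\<^sup>2 > 0\<close> keeps
  the inequality strict.\<close>

lemma borel_measurable_cnj [measurable]:
  "f \<in> borel_measurable M \<Longrightarrow> (\<lambda>x. cnj (f x)) \<in> borel_measurable M"
  by (erule measurable_compose) (intro borel_measurable_continuous_onI continuous_intros)

lemma integral_comp_eq_of_distr_eq:
  fixes f :: "'b \<Rightarrow> 'c::{banach, second_countable_topology}"
  assumes "X \<in> measurable M N" "Y \<in> measurable M N" "distr M N X = distr M N Y"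
    and "f \<in> borel_measurable N"
  shows "(\<integral>x. f (X x) \<partial>M) = (\<integral>x. f (Y x) \<partial>M)"
  using integral_distr[OF assms(1,4)] integral_distr[OF assms(2,4)] assms(3) by simp

lemma integrable_comp_iff_of_distr_eq:
  fixes f :: "'b \<Rightarrow> 'c::{banach, second_countable_topology}"
  assumes "X \<in> measurable M N" "Y \<in> measurable M N" "distr M N X = distr M N Y"
    and "f \<in> borel_measurable N"
  shows "integrable M (\<lambda>x. f (X x)) \<longleftrightarrow> integrable M (\<lambda>x. f (Y x))"
  using integrable_distr_eq[OF assms(1,4)] integrable_distr_eq[OF assms(2,4)] assms(3) by simp

lemma (in finite_measure) integrable_of_integrable_norm_power2:
  fixes f :: "'a \<Rightarrow> 'b::{banach, second_countable_topology}"
  assumes "f \<in> borel_measurable M" "integrable M (\<lambda>x. (norm (f x))\<^sup>2)"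
  shows "integrable M f"
proof (rule integrable_norm_cancel)
  show "integrable M (\<lambda>x. norm (f x))"
    by (rule square_integrable_imp_integrable[OF measurable_compose[OF assms(1) borel_measurable_norm] assms(2)])
qed (fact assms(1))

lemma integrable_mult_cnj:
  fixes a b :: "'a \<Rightarrow> complex"
  assumes "a \<in> borel_measurable M" "b \<in> borel_measurable M"
    and "integrable M (\<lambda>x. (cmod (a x))\<^sup>2)" "integrable M (\<lambda>x. (cmod (b x))\<^sup>2)"
  shows "integrable M (\<lambda>x. a x * cnj (b x))"
proof (rule Bochner_Integration.integrable_bound)
  show "integrable M (\<lambda>x. (cmod (a x))\<^sup>2 + (cmod (b x))\<^sup>2)"
    using assms by auto
  show "(\<lambda>x. a x * cnj (b x)) \<in> borel_measurable M"
    using assms(1,2) by measurable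
  have "cmod (a x) * cmod (b x) \<le> (cmod (a x))\<^sup>2 + (cmod (b x))\<^sup>2" for x
    using sum_squares_bound[of "cmod (a x)" "cmod (b x)"]
      mult_nonneg_nonneg[OF norm_ge_zero[of "a x"] norm_ge_zero[of "b x"]] by linarith
  then show "AE x in M. norm (a x * cnj (b x)) \<le> norm ((cmod (a x))\<^sup>2 + (cmod (b x))\<^sup>2)"
    by (simp add: norm_mult)
qed

lemma integral_cmod_diff_mult_power2:
  fixes a b :: "'a \<Rightarrow> complex" and G :: complex
  assumes "a \<in> borel_measurable M" "b \<in> borel_measurable M"
    and a2: "integrable M (\<lambda>x. (cmod (a x))\<^sup>2)" and b2: "integrable M (\<lambda>x. (cmod (b x))\<^sup>2)"
  shows "(\<integral>x. (cmod (a x - G * b x))\<^sup>2 \<partial>M) = (\<integral>x. (cmod (a x))\<^sup>2 \<partial>M)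
      + (cmod G)\<^sup>2 * (\<integral>x. (cmod (b x))\<^sup>2 \<partial>M) - 2 * Re (cnj G * (\<integral>x. a x * cnj (b x) \<partial>M))"
proof -
  have ab: "integrable M (\<lambda>x. cnj G * (a x * cnj (b x)))"
    using integrable_mult_cnj[OF assms] by simp
  have "(cmod (a x - G * b x))\<^sup>2 = (cmod (a x))\<^sup>2 + (cmod G)\<^sup>2 * (cmod (b x))\<^sup>2
      - 2 * Re (cnj G * (a x * cnj (b x)))" for x
    by (simp only: cmod_power2) (simp add: power2_eq_square algebra_simps)
  then have "(\<integral>x. (cmod (a x - G * b x))\<^sup>2 \<partial>M) = (\<integral>x. (cmod (a x))\<^sup>2
      + (cmod G)\<^sup>2 * (cmod (b x))\<^sup>2 - 2 * Re (cnj G * (a x * cnj (b x))) \<partial>M)"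
    by (simp only:)
  also have "\<dots> = (\<integral>x. (cmod (a x))\<^sup>2 \<partial>M)
      + (cmod G)\<^sup>2 * (\<integral>x. (cmod (b x))\<^sup>2 \<partial>M) - 2 * (\<integral>x. Re (cnj G * (a x * cnj (b x))) \<partial>M)"
    \<comment> \<open>without \<open>times_complex.sel\<close> simp would split \<open>Re\<close> and lose the integrable term\<close>
    using a2 b2 integrable_Re[OF ab]
    by (simp del: times_complex.sel)
  also have "(\<integral>x. Re (cnj G * (a x * cnj (b x))) \<partial>M) = Re (cnj G * (\<integral>x. a x * cnj (b x) \<partial>M))"
    using integral_Re[OF ab] by simp
  finally show ?thesis .
qed

lemma (in prob_space) indep_var_integral_mult_cnj:
  fixes X Y :: "'a \<Rightarrow> complex"
  assumes "indep_var borel X borel Y" "integrable M X" "integrable M Y"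
  shows "(\<integral>x. X x * cnj (Y x) \<partial>M) = (\<integral>x. X x \<partial>M) * cnj (\<integral>x. Y x \<partial>M)"
proof -
  have "indep_var borel X borel (\<lambda>x. cnj (Y x))"
    using indep_var_compose[OF assms(1), of "\<lambda>z. z" borel cnj borel]
    by (simp add: comp_def)
  from indep_var_lebesgue_integral[OF this assms(2) integrable_cnj[OF assms(3)]]
  show ?thesis by simp
qed

lemma asym_var_divide:
  "asym_var M (\<lambda>x. f x / c) = (\<integral>x. (cmod (f x))\<^sup>2 \<partial>M) / (cmod c)\<^sup>2"
  by (simp add: asym_var_def norm_divide power_divide)

theorem theorem1:
  fixes M :: "'a measure"
    and Vy Vu Vy1 Vu2 :: "'a \<Rightarrow> complex"
    and G S R :: complex
  assumes prob: "prob_space M"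
    and meas: "Vy \<in> borel_measurable M" "Vu \<in> borel_measurable M"
              "Vy1 \<in> borel_measurable M" "Vu2 \<in> borel_measurable M"
    and fin_var: "integrable M (\<lambda>x. (cmod (Vy x))^2)" "integrable M (\<lambda>x. (cmod (Vu x))^2)"
    and zero_mean: "(\<integral>x. Vy x \<partial>M) = 0" "(\<integral>x. Vu x \<partial>M) = 0"
    and distr_y1: "distr M borel Vy1 = distr M borel Vy"
    and distr_u2: "distr M borel Vu2 = distr M borel Vu"
    and indep: "prob_space.indep_var M borel Vy1 borel Vu2"
    and SR_nz: "S * R \<noteq> 0"
    and neg: "Re (cnj G * (\<integral>x. Vy x * cnj (Vu x) \<partial>M)) < 0"
  shows "asym_var M (\<lambda>x. (Vy1 x - G * Vu2 x) / (S * R))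
       < asym_var M (\<lambda>x. (Vy x - G * Vu x) / (S * R))"
proof -
  interpret prob_space M by fact
  have sq: "(\<lambda>z::complex. (cmod z)\<^sup>2) \<in> borel_measurable borel" by measurable
  have id: "(\<lambda>z::complex. z) \<in> borel_measurable borel" by measurable
  note y1 = integral_comp_eq_of_distr_eq[OF meas(3,1) distr_y1] integrable_comp_iff_of_distr_eq[OF meas(3,1) distr_y1]
  note u2 = integral_comp_eq_of_distr_eq[OF meas(4,2) distr_u2] integrable_comp_iff_of_distr_eq[OF meas(4,2) distr_u2]
  have y1_var: "integrable M (\<lambda>x. (cmod (Vy1 x))\<^sup>2)"
    using y1(2)[OF sq] fin_var(1) by simp
  have u2_var: "integrable M (\<lambda>x. (cmod (Vu2 x))\<^sup>2)"
    using u2(2)[OF sq] fin_var(2) by simp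
  have y1_mean: "(\<integral>x. Vy1 x \<partial>M) = 0"
    using y1(1)[OF id] zero_mean(1) by simp
  have cross: "(\<integral>x. Vy1 x * cnj (Vu2 x) \<partial>M) = 0"
    using indep_var_integral_mult_cnj[OF indep integrable_of_integrable_norm_power2[OF meas(3) y1_var]
        integrable_of_integrable_norm_power2[OF meas(4) u2_var]] y1_mean
    by simp
  have "(\<integral>x. (cmod (Vy1 x - G * Vu2 x))\<^sup>2 \<partial>M) < (\<integral>x. (cmod (Vy x - G * Vu x))\<^sup>2 \<partial>M)"
    using integral_cmod_diff_mult_power2[OF meas(3,4) y1_var u2_var, of G]
      integral_cmod_diff_mult_power2[OF meas(1,2) fin_var, of G]
      y1(1)[OF sq] u2(1)[OF sq] cross neg
    by simp
  then show ?thesis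
    using SR_nz by (simp add: asym_var_divide divide_strict_right_mono)
qed

end
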